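(* If $H$ is a graph with $\gamma_I(H)=\gamma(H)=3$, then for any graph $G$, $\gamma_I(G\circ H)=\gamma_{(2,2,2,0)}(G)$.
   Context: All graphs are finite and simple; $N(v)$ denotes the open neighbourhood of a vertex $v$. For an integer $l\ge1$ and a vector $w=(w_0,\dots,w_l)$ of nonnegative integers with $w_0\ge 1$, a function $f:V(G)\to\{0,1,\dots,l\}$ is a $w$-dominating function on $G$ if $\sum_{u\in N(v)}f(u)\ge w_i$ for every vertex $v$ with $f(v)=i$ ($i=0,\dots,l$). The weight of $f$ is $\omega(f)=\sum_{v\in V(G)}f(v)$, and $\gamma_w(G)=\gamma_{(w_0,\dots,w_l)}(G)$ is the minimum weight of a $w$-dominating function on $G$. The Italian domination number is $\gamma_I(G)=\gamma_{(2,0,0)}(G)$, i.e., the minimum weight of $f:V(G)\to\{0,1,2\}$ with $\sum_{u\in N(v)}f(u)\ge 2$ for every $v$ with $f(v)=0$. $\gamma(H)$ is the domination number. The lexicographic product $G\circ H$ has vertex set $V(G)\times V(H)$, with $(u,v)(x,y)$ an edge iff $ux\in E(G)$, or $u=x$ and $vy\in E(H)$. *)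

theory Defs
  imports Main
begin

definition graph :: "'a set \<Rightarrow> ('a \<Rightarrow> 'a \<Rightarrow> bool) \<Rightarrow> bool" where
  "graph V E \<longleftrightarrow> finite V \<and> (\<forall>x y. E x y \<longrightarrow> x \<in> V \<and> y \<in> V)
     \<and> (\<forall>x y. E x y \<longrightarrow> E y x) \<and> (\<forall>x. \<not> E x x)"

definition nbhd :: "'a set \<Rightarrow> ('a \<Rightarrow> 'a \<Rightarrow> bool) \<Rightarrow> 'a \<Rightarrow> 'a set" where
  "nbhd V E v = {u \<in> V. E v u}"

definition w_dominating :: "'a set \<Rightarrow> ('a \<Rightarrow> 'a \<Rightarrow> bool) \<Rightarrow> nat list \<Rightarrow> ('a \<Rightarrow> nat) \<Rightarrow> bool" where
  "w_dominating V E w f \<longleftrightarrow>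
     (\<forall>v. v \<notin> V \<longrightarrow> f v = 0) \<and>
     (\<forall>v\<in>V. f v \<le> length w - 1) \<and>
     (\<forall>v\<in>V. (\<Sum>u\<in>nbhd V E v. f u) \<ge> w ! (f v))"

definition gamma_w :: "'a set \<Rightarrow> ('a \<Rightarrow> 'a \<Rightarrow> bool) \<Rightarrow> nat list \<Rightarrow> nat" where
  "gamma_w V E w = Inf {(\<Sum>v\<in>V. f v) | f. w_dominating V E w f}"

definition italian_domination_number :: "'a set \<Rightarrow> ('a \<Rightarrow> 'a \<Rightarrow> bool) \<Rightarrow> nat" where
  "italian_domination_number V E = gamma_w V E [2, 0, 0]"

definition dominating_set :: "'a set \<Rightarrow> ('a \<Rightarrow> 'a \<Rightarrow> bool) \<Rightarrow> 'a set \<Rightarrow> bool" where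
  "dominating_set V E D \<longleftrightarrow> D \<subseteq> V \<and> (\<forall>v\<in>V - D. \<exists>u\<in>D. E v u)"

definition domination_number :: "'a set \<Rightarrow> ('a \<Rightarrow> 'a \<Rightarrow> bool) \<Rightarrow> nat" where
  "domination_number V E = Inf {card D | D. dominating_set V E D}"

definition lex_edge :: "('a \<Rightarrow> 'a \<Rightarrow> bool) \<Rightarrow> ('b \<Rightarrow> 'b \<Rightarrow> bool) \<Rightarrow> 'a \<times> 'b \<Rightarrow> 'a \<times> 'b \<Rightarrow> bool" where
  "lex_edge EG EH p q \<longleftrightarrow> EG (fst p) (fst q) \<or> (fst p = fst q \<and> EH (snd p) (snd q))"

end

theory Submission
  imports Defs
begin

text \<open>
  A [2,2,2,0]-dominating function g on G lifts to an Italian dominating function on G \<circ> H of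
  the same weight: over a vertex x with g x = 3 put a minimum Italian dominating function of H
  (of weight 3), otherwise put the value g x on a single vertex of the layer {x} \<times> V(H).
  Conversely, the layer weights of an Italian dominating function f on G \<circ> H, capped at 3, form a
  [2,2,2,0]-dominating function on G. Indeed, suppose the layer over u has weight at most 2
  while the layers over N(u) carry total weight at most 1. If they carry nothing, f restricted to
  the layer is an Italian dominating function of H; if they carry 1, every vertex of the layer
  with value 0 has a positive neighbour inside it, so the support of the layer dominates H.
  Either way this contradicts \<gamma>_I(H) = \<gamma>(H) = 3.
\<close>

lemma w_dominating_italian_iff:
  "w_dominating V E [2, 0, 0] f \<longleftrightarrow>
     (\<forall>v. v \<notin> V \<longrightarrow> f v = 0) \<and> (\<forall>v\<in>V. f v \<le> 2) \<and>
     (\<forall>v\<in>V. f v = 0 \<longrightarrow> 2 \<le> (\<Sum>u\<in>nbhd V E v. f u))"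
proof -
  have "[2, 0, 0] ! k = (if k = 0 then 2 else 0 :: nat)" if "k \<le> 2" for k
    using that by (cases k) (auto simp: less_Suc_eq nth_Cons split: nat.split)
  then show ?thesis
    unfolding w_dominating_def by (auto simp: numeral_2_eq_2)
qed

lemma w_dominating_2220_iff:
  "w_dominating V E [2, 2, 2, 0] f \<longleftrightarrow>
     (\<forall>v. v \<notin> V \<longrightarrow> f v = 0) \<and> (\<forall>v\<in>V. f v \<le> 3) \<and>
     (\<forall>v\<in>V. f v < 3 \<longrightarrow> 2 \<le> (\<Sum>u\<in>nbhd V E v. f u))"
proof -
  have "[2, 2, 2, 0] ! k = (if k < 3 then 2 else 0 :: nat)" if "k \<le> 3" for k
    using that by (cases k) (auto simp: less_Suc_eq nth_Cons split: nat.split)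
  then show ?thesis
    unfolding w_dominating_def by (auto simp: numeral_3_eq_3)
qed

lemma w_dominating_top:
  assumes "w \<noteq> []" and "last w = 0"
  shows "w_dominating V E w (\<lambda>v. if v \<in> V then length w - 1 else 0)"
  using assms unfolding w_dominating_def by (simp add: last_conv_nth)

lemma gamma_w_le_weight:
  "w_dominating V E w f \<Longrightarrow> gamma_w V E w \<le> (\<Sum>v\<in>V. f v)"
  unfolding gamma_w_def by (rule cInf_lower) auto

lemma gamma_w_attained:
  assumes "w \<noteq> []" and "last w = 0"
  obtains f where "w_dominating V E w f" and "(\<Sum>v\<in>V. f v) = gamma_w V E w"
proof -
  have "gamma_w V E w \<in> {(\<Sum>v\<in>V. f v) | f. w_dominating V E w f}"
    unfolding gamma_w_def by (rule Inf_nat_def1) (use w_dominating_top[OF assms] in blast)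
  then obtain f where "w_dominating V E w f" and "gamma_w V E w = (\<Sum>v\<in>V. f v)"
    by blast
  with that show ?thesis by simp
qed

lemma domination_number_le_card:
  "dominating_set V E D \<Longrightarrow> domination_number V E \<le> card D"
  unfolding domination_number_def by (rule cInf_lower) auto

lemma card_support_le_sum:
  fixes f :: "'a \<Rightarrow> nat"
  assumes "finite A"
  shows "card {x \<in> A. 0 < f x} \<le> (\<Sum>x\<in>A. f x)"
proof -
  have "card {x \<in> A. 0 < f x} = (\<Sum>x\<in>{x \<in> A. 0 < f x}. 1)" by simp
  also have "\<dots> \<le> (\<Sum>x\<in>{x \<in> A. 0 < f x}. f x)" by (rule sum_mono) auto
  also have "\<dots> \<le> (\<Sum>x\<in>A. f x)" using assms by (intro sum_mono2) auto
  finally show ?thesis .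
qed

lemma min_sum_le_sum_min:
  fixes f :: "'a \<Rightarrow> nat"
  assumes "finite A"
  shows "min (\<Sum>x\<in>A. f x) c \<le> (\<Sum>x\<in>A. min (f x) c)"
  using assms by (induction A rule: finite_induct) auto

lemma nbhd_lex_edge:
  assumes "graph VG EG" and "u \<in> VG"
  shows "nbhd (VG \<times> VH) (lex_edge EG EH) (u, h) = nbhd VG EG u \<times> VH \<union> {u} \<times> nbhd VH EH h"
  using assms unfolding nbhd_def lex_edge_def graph_def by auto

lemma sum_nbhd_lex_edge:
  assumes "graph VG EG" and "graph VH EH" and "u \<in> VG"
  shows "(\<Sum>p\<in>nbhd (VG \<times> VH) (lex_edge EG EH) (u, h). f p)
     = (\<Sum>x\<in>nbhd VG EG u. \<Sum>y\<in>VH. f (x, y)) + (\<Sum>y\<in>nbhd VH EH h. f (u, y))"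
proof -
  have "finite VG" and "finite VH" using assms(1,2) unfolding graph_def by auto
  then have "finite (nbhd VG EG u \<times> VH)" and "finite ({u} \<times> nbhd VH EH h)"
    unfolding nbhd_def by auto
  moreover have "(nbhd VG EG u \<times> VH) \<inter> ({u} \<times> nbhd VH EH h) = {}"
    using assms(1) unfolding nbhd_def graph_def by auto
  ultimately show ?thesis
    by (simp add: nbhd_lex_edge[OF assms(1,3)] sum.union_disjoint sum.cartesian_product')
qed

lemma lex_italian_of_w2220:
  assumes G: "graph VG EG" and H: "graph VH EH"
    and g: "w_dominating VG EG [2, 2, 2, 0] g"
    and \<phi>: "w_dominating VH EH [2, 0, 0] \<phi>" and \<phi>_weight: "(\<Sum>y\<in>VH. \<phi> y) = 3"
  obtains f where "w_dominating (VG \<times> VH) (lex_edge EG EH) [2, 0, 0] f"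
    and "(\<Sum>p\<in>VG \<times> VH. f p) = (\<Sum>x\<in>VG. g x)"
proof -
  have "finite VH" using H unfolding graph_def by simp
  obtain h0 where h0: "h0 \<in> VH" using \<phi>_weight by fastforce
  define f where "f = (\<lambda>(x, y). if x \<in> VG \<and> y \<in> VH then
      (if g x = 3 then \<phi> y else if y = h0 then g x else 0) else (0::nat))"
  have row: "(\<Sum>y\<in>VH. f (x, y)) = g x" if "x \<in> VG" for x
  proof (cases "g x = 3")
    case True
    then show ?thesis using that \<phi>_weight unfolding f_def by simp
  next
    case False
    then have "(\<Sum>y\<in>VH. f (x, y)) = (\<Sum>y\<in>VH. if y = h0 then g x else 0)"
      using that unfolding f_def by (intro sum.cong) auto
    also have "\<dots> = g x" using h0 \<open>finite VH\<close> by simp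
    finally show ?thesis .
  qed
  have g_le: "g x \<le> 3" and g_less: "g x < 3 \<Longrightarrow> 2 \<le> (\<Sum>x'\<in>nbhd VG EG x. g x')"
    if "x \<in> VG" for x
    using g that unfolding w_dominating_2220_iff by auto
  have \<phi>_le: "\<phi> y \<le> 2" and \<phi>_0: "\<phi> y = 0 \<Longrightarrow> 2 \<le> (\<Sum>y'\<in>nbhd VH EH y. \<phi> y')"
    if "y \<in> VH" for y
    using \<phi> that unfolding w_dominating_italian_iff by auto
  have "w_dominating (VG \<times> VH) (lex_edge EG EH) [2, 0, 0] f"
    unfolding w_dominating_italian_iff
  proof (intro conjI ballI allI impI)
    fix p :: "'a \<times> 'b"
    show "p \<notin> VG \<times> VH \<Longrightarrow> f p = 0" unfolding f_def by (cases p) auto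
    assume "p \<in> VG \<times> VH"
    then obtain u h where p: "p = (u, h)" and u: "u \<in> VG" and h: "h \<in> VH" by blast
    show "f p \<le> 2" using g_le[OF u] \<phi>_le[OF h] unfolding p f_def by auto
    assume "f p = 0"
    have "2 \<le> (\<Sum>x\<in>nbhd VG EG u. \<Sum>y\<in>VH. f (x, y)) + (\<Sum>y\<in>nbhd VH EH h. f (u, y))"
    proof (cases "g u = 3")
      case True
      then have "2 \<le> (\<Sum>y\<in>nbhd VH EH h. \<phi> y)"
        using \<phi>_0[OF h] \<open>f p = 0\<close> u h unfolding p f_def by simp
      also have "\<dots> = (\<Sum>y\<in>nbhd VH EH h. f (u, y))"
        using u True by (intro sum.cong) (auto simp: nbhd_def f_def)
      finally show ?thesis by simp
    next
      case False
      then have "2 \<le> (\<Sum>x\<in>nbhd VG EG u. g x)" using g_le[OF u] g_less[OF u] by simp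
      also have "\<dots> = (\<Sum>x\<in>nbhd VG EG u. \<Sum>y\<in>VH. f (x, y))"
        by (intro sum.cong) (auto simp: nbhd_def row)
      finally show ?thesis by simp
    qed
    then show "2 \<le> (\<Sum>q\<in>nbhd (VG \<times> VH) (lex_edge EG EH) p. f q)"
      unfolding p sum_nbhd_lex_edge[OF G H u] .
  qed
  moreover have "(\<Sum>p\<in>VG \<times> VH. f p) = (\<Sum>x\<in>VG. g x)"
    unfolding sum.cartesian_product' by (intro sum.cong) (auto simp: row)
  ultimately show ?thesis by (rule that)
qed

lemma lex_italian_layer_zero:
  assumes G: "graph VG EG" and H: "graph VH EH"
    and f: "w_dominating (VG \<times> VH) (lex_edge EG EH) [2, 0, 0] f"
    and "u \<in> VG" and "h \<in> VH" and "f (u, h) = 0"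
  shows "2 \<le> (\<Sum>x\<in>nbhd VG EG u. \<Sum>y\<in>VH. f (x, y)) + (\<Sum>y\<in>nbhd VH EH h. f (u, y))"
  using f assms(4-6) unfolding w_dominating_italian_iff sum_nbhd_lex_edge[OF G H \<open>u \<in> VG\<close>, symmetric]
  by blast

lemma lex_italian_layer_italian:
  assumes G: "graph VG EG" and H: "graph VH EH"
    and f: "w_dominating (VG \<times> VH) (lex_edge EG EH) [2, 0, 0] f"
    and u: "u \<in> VG" and outer: "(\<Sum>x\<in>nbhd VG EG u. \<Sum>y\<in>VH. f (x, y)) = 0"
  shows "w_dominating VH EH [2, 0, 0] (\<lambda>y. f (u, y))"
  using f lex_italian_layer_zero[OF G H f u] u outer unfolding w_dominating_italian_iff by auto

lemma lex_italian_layer_support_dominating: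
  assumes G: "graph VG EG" and H: "graph VH EH"
    and f: "w_dominating (VG \<times> VH) (lex_edge EG EH) [2, 0, 0] f"
    and u: "u \<in> VG" and outer: "(\<Sum>x\<in>nbhd VG EG u. \<Sum>y\<in>VH. f (x, y)) \<le> 1"
  shows "dominating_set VH EH {y \<in> VH. 0 < f (u, y)}"
  unfolding dominating_set_def
proof (intro conjI ballI)
  fix h assume "h \<in> VH - {y \<in> VH. 0 < f (u, y)}"
  then have "1 \<le> (\<Sum>y\<in>nbhd VH EH h. f (u, y))"
    using lex_italian_layer_zero[OF G H f u] outer by fastforce
  then obtain y where "y \<in> nbhd VH EH h" and "f (u, y) \<noteq> 0"
    by (metis (no_types, lifting) not_one_le_zero sum.neutral)
  then show "\<exists>y\<in>{y \<in> VH. 0 < f (u, y)}. EH h y" unfolding nbhd_def by auto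
qed auto

lemma lex_italian_layer_weight:
  assumes G: "graph VG EG" and H: "graph VH EH"
    and f: "w_dominating (VG \<times> VH) (lex_edge EG EH) [2, 0, 0] f"
    and \<gamma>I: "3 \<le> italian_domination_number VH EH" and \<gamma>: "3 \<le> domination_number VH EH"
    and u: "u \<in> VG"
  shows "3 \<le> (\<Sum>y\<in>VH. f (u, y)) \<or> 2 \<le> (\<Sum>x\<in>nbhd VG EG u. \<Sum>y\<in>VH. f (x, y))"
proof (cases "(\<Sum>x\<in>nbhd VG EG u. \<Sum>y\<in>VH. f (x, y)) = 0")
  case True
  then have "italian_domination_number VH EH \<le> (\<Sum>y\<in>VH. f (u, y))"
    unfolding italian_domination_number_def
    by (intro gamma_w_le_weight lex_italian_layer_italian[OF G H f u])
  then show ?thesis using \<gamma>I by simp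
next
  case False
  show ?thesis
  proof (cases "(\<Sum>x\<in>nbhd VG EG u. \<Sum>y\<in>VH. f (x, y)) \<le> 1")
    case True
    have "finite VH" using H unfolding graph_def by simp
    have "domination_number VH EH \<le> card {y \<in> VH. 0 < f (u, y)}"
      by (intro domination_number_le_card lex_italian_layer_support_dominating[OF G H f u True])
    also have "\<dots> \<le> (\<Sum>y\<in>VH. f (u, y))" using \<open>finite VH\<close> by (rule card_support_le_sum)
    finally show ?thesis using \<gamma> by simp
  qed simp
qed

lemma w2220_of_lex_italian:
  assumes G: "graph VG EG" and H: "graph VH EH"
    and f: "w_dominating (VG \<times> VH) (lex_edge EG EH) [2, 0, 0] f"
    and "3 \<le> italian_domination_number VH EH" and "3 \<le> domination_number VH EH"
  obtains g where "w_dominating VG EG [2, 2, 2, 0] g"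
    and "(\<Sum>x\<in>VG. g x) \<le> (\<Sum>p\<in>VG \<times> VH. f p)"
proof -
  have "finite VG" using G unfolding graph_def by simp
  define g where "g x = min (\<Sum>y\<in>VH. f (x, y)) 3" for x
  have "w_dominating VG EG [2, 2, 2, 0] g"
    unfolding w_dominating_2220_iff
  proof (intro conjI ballI allI impI)
    fix u
    show "u \<notin> VG \<Longrightarrow> g u = 0"
      using f unfolding g_def w_dominating_italian_iff by simp
    show "g u \<le> 3" unfolding g_def by simp
    assume "u \<in> VG" and "g u < 3"
    then have "2 \<le> (\<Sum>x\<in>nbhd VG EG u. \<Sum>y\<in>VH. f (x, y))"
      using lex_italian_layer_weight[OF G H f assms(4,5)] unfolding g_def by fastforce
    then have "2 \<le> min (\<Sum>x\<in>nbhd VG EG u. \<Sum>y\<in>VH. f (x, y)) 3" by simp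
    also have "\<dots> \<le> (\<Sum>x\<in>nbhd VG EG u. g x)"
      unfolding g_def using \<open>finite VG\<close> by (intro min_sum_le_sum_min) (simp add: nbhd_def)
    finally show "2 \<le> (\<Sum>x\<in>nbhd VG EG u. g x)" .
  qed
  moreover have "(\<Sum>x\<in>VG. g x) \<le> (\<Sum>p\<in>VG \<times> VH. f p)"
    unfolding g_def sum.cartesian_product' by (intro sum_mono) simp
  ultimately show ?thesis by (rule that)
qed

theorem theorem3:
  fixes VG :: "'a set" and EG :: "'a \<Rightarrow> 'a \<Rightarrow> bool"
    and VH :: "'b set" and EH :: "'b \<Rightarrow> 'b \<Rightarrow> bool"
  assumes "graph VG EG" and "graph VH EH"
    and "italian_domination_number VH EH = 3"
    and "domination_number VH EH = 3"
  shows "italian_domination_number (VG \<times> VH) (lex_edge EG EH) = gamma_w VG EG [2, 2, 2, 0]"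
proof (rule antisym)
  obtain \<phi> where \<phi>: "w_dominating VH EH [2, 0, 0] \<phi>" and "(\<Sum>y\<in>VH. \<phi> y) = 3"
    using gamma_w_attained[of "[2, 0, 0]" VH EH] assms(3)
    unfolding italian_domination_number_def by auto
  obtain g where g: "w_dominating VG EG [2, 2, 2, 0] g"
    and g_weight: "(\<Sum>x\<in>VG. g x) = gamma_w VG EG [2, 2, 2, 0]"
    using gamma_w_attained[of "[2, 2, 2, 0]" VG EG] by auto
  obtain f where "w_dominating (VG \<times> VH) (lex_edge EG EH) [2, 0, 0] f"
    and "(\<Sum>p\<in>VG \<times> VH. f p) = (\<Sum>x\<in>VG. g x)"
    using lex_italian_of_w2220[OF assms(1,2) g \<phi> \<open>(\<Sum>y\<in>VH. \<phi> y) = 3\<close>] .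
  then show "italian_domination_number (VG \<times> VH) (lex_edge EG EH) \<le> gamma_w VG EG [2, 2, 2, 0]"
    unfolding italian_domination_number_def using g_weight by (metis gamma_w_le_weight)
next
  obtain f where f: "w_dominating (VG \<times> VH) (lex_edge EG EH) [2, 0, 0] f"
    and f_weight: "(\<Sum>p\<in>VG \<times> VH. f p) = italian_domination_number (VG \<times> VH) (lex_edge EG EH)"
    using gamma_w_attained[of "[2, 0, 0]" "VG \<times> VH" "lex_edge EG EH"]
    unfolding italian_domination_number_def by auto
  obtain g where "w_dominating VG EG [2, 2, 2, 0] g" and "(\<Sum>x\<in>VG. g x) \<le> (\<Sum>p\<in>VG \<times> VH. f p)"
    using w2220_of_lex_italian[OF assms(1,2) f] assms(3,4) by auto
  then show "gamma_w VG EG [2, 2, 2, 0] \<le> italian_domination_number (VG \<times> VH) (lex_edge EG EH)"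
    using f_weight by (metis gamma_w_le_weight order_trans)
qed

end
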